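(* Let $\mathcal{F}\subseteq 2^{\mathcal{P}}$. The zero locus in $\mathbb{B}^n$ of the polynomial $\lambda(\bar T)=\prod_{F\in\mathcal{F}}\gamma(\varphi(F),\bar T)\in\mathbb{B}(\bar T)$ is exactly $\varphi(\mathcal{F}^* )=\{\varphi(F'):F'\in\mathcal{F}^*\}$.
   Context: $\mathbb{B}=\mathbb{F}_2$, $\mathcal{P}=\{P_1,\ldots,P_n\}$, $\mathbb{B}(\bar T)=\mathbb{F}_2[T_1,\ldots,T_n]/\langle T_i^2-T_i\rangle$. $\varphi:2^{\mathcal{P}}\to\mathbb{B}^n$ sends a set to its indicator vector. $\gamma(\bar X,\bar Y)=\prod_{i=1}^n(X_iY_i+Y_i+1)+1$. $\mathcal{F}^*=\{F'\subseteq F: F\in\mathcal{F}\}$. *)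

theory Defs
  imports Main "HOL-Library.Z2"
begin

text \<open>The ground set P = {P_1,...,P_n} is modelled by a finite type 'p;
  points of B^n are functions 'p => bit (bit = F_2).\<close>

definition phi :: "'p set \<Rightarrow> ('p \<Rightarrow> bit)" where
  "phi F = (\<lambda>i. if i \<in> F then 1 else 0)"

definition gamma :: "('p::finite \<Rightarrow> bit) \<Rightarrow> ('p \<Rightarrow> bit) \<Rightarrow> bit" where
  "gamma X Y = (\<Prod>i\<in>UNIV. X i * Y i + Y i + 1) + 1"

definition lambda_poly :: "'p::finite set set \<Rightarrow> ('p \<Rightarrow> bit) \<Rightarrow> bit" where
  "lambda_poly \<F> Y = (\<Prod>F\<in>\<F>. gamma (phi F) Y)"

definition down_closure :: "'p set set \<Rightarrow> 'p set set" where
  "down_closure \<F> = {F'. \<exists>F\<in>\<F>. F' \<subseteq> F}"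

end

theory Submission
  imports Defs
begin

text \<open>Over \<open>\<bool>\<close> the factor \<open>X\<^sub>i Y\<^sub>i + Y\<^sub>i + 1\<close> vanishes exactly when \<open>Y\<^sub>i = 1\<close> and
  \<open>X\<^sub>i = 0\<close>, so \<open>\<gamma>(X, Y) = 0\<close> iff the support of \<open>Y\<close> is contained in that of \<open>X\<close>.
  Since \<open>\<bool>\<close> is a field, \<open>\<lambda>(Y) = 0\<close> iff one of its factors vanishes, i.e. iff the
  support of \<open>Y\<close> lies in some \<open>F \<in> \<F>\<close>; and every point of \<open>\<bool>\<^sup>n\<close> is \<open>\<phi>\<close> of its support.\<close>

lemma phi_eq_1_iff [simp]: "phi A i = 1 \<longleftrightarrow> i \<in> A"
  by (simp add: phi_def)

lemma phi_support: "phi {i. Y i = 1} = Y"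
proof
  show "phi {i. Y i = 1} i = Y i" for i
    by (cases "Y i") (simp_all add: phi_def)
qed

lemma gamma_factor_ne_0_iff: "x * y + y + 1 \<noteq> (0::bit) \<longleftrightarrow> (y = 1 \<longrightarrow> x = 1)"
  by (cases x; cases y) simp_all

lemma gamma_eq_0_iff: "gamma X Y = 0 \<longleftrightarrow> (\<forall>i. Y i = 1 \<longrightarrow> X i = 1)"
proof -
  have "gamma X Y = 0 \<longleftrightarrow> (\<Prod>i\<in>UNIV. X i * Y i + Y i + 1) \<noteq> 0"
    by (cases "\<Prod>i\<in>UNIV. X i * Y i + Y i + 1") (simp_all add: gamma_def)
  also have "\<dots> \<longleftrightarrow> (\<forall>i. X i * Y i + Y i + 1 \<noteq> 0)"
    by simp
  also have "\<dots> \<longleftrightarrow> (\<forall>i. Y i = 1 \<longrightarrow> X i = 1)"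
    by (simp only: gamma_factor_ne_0_iff)
  finally show ?thesis .
qed

lemma gamma_phi_eq_0_iff: "gamma (phi F) Y = 0 \<longleftrightarrow> {i. Y i = 1} \<subseteq> F"
  by (auto simp: gamma_eq_0_iff)

lemma lambda_poly_eq_0_iff:
  "lambda_poly \<F> Y = 0 \<longleftrightarrow> (\<exists>F\<in>\<F>. {i. Y i = 1} \<subseteq> F)"
proof -
  have "finite \<F>"
    by (rule finite_subset[of _ UNIV]) simp_all
  then show ?thesis
    by (simp add: lambda_poly_def gamma_phi_eq_0_iff)
qed

lemma phi_image_down_closure:
  fixes \<F> :: "'p set set"
  shows "phi ` down_closure \<F> = {Y. \<exists>F\<in>\<F>. {i. Y i = 1} \<subseteq> F}"
proof (intro set_eqI iffI)
  fix Y :: "'p \<Rightarrow> bit"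
  assume "Y \<in> phi ` down_closure \<F>"
  then show "Y \<in> {Y. \<exists>F\<in>\<F>. {i. Y i = 1} \<subseteq> F}"
    by (force simp: down_closure_def)
next
  fix Y :: "'p \<Rightarrow> bit"
  assume "Y \<in> {Y. \<exists>F\<in>\<F>. {i. Y i = 1} \<subseteq> F}"
  then have "{i. Y i = 1} \<in> down_closure \<F>"
    by (auto simp: down_closure_def)
  then show "Y \<in> phi ` down_closure \<F>"
    using phi_support[of Y] by (metis image_eqI)
qed

theorem mainTheorem12:
  fixes \<F> :: "'p::finite set set"
  shows "{Y :: 'p \<Rightarrow> bit. lambda_poly \<F> Y = 0} = phi ` down_closure \<F>"
  by (simp only: lambda_poly_eq_0_iff phi_image_down_closure)

end
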